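(* Let $f_0$ be a probability density on a sample space $\mathcal{X}$ and let $\mathcal{X}_n=\{x_1,\dots,x_n\}$ be drawn independently from $f_0$. Let $\mathcal{F}$ be the space of densities on $\mathcal{X}$, let $\Pi(\mathcal{X}_n)$ be the (finite) set of sub-partitions of $\mathcal{X}_n$, and let $\psi,\tilde\psi:\mathcal{F}\to\Pi(\mathcal{X}_n)$ be maps (possibly depending on $\mathcal{X}_n$ and $n$). Let $P_M(\cdot\mid\mathcal{X}_n)$ be the posterior distribution of $f\in\mathcal{F}$ under a Bayesian model $M$, and let $$\hat{\mathbf{C}}\in\operatorname*{argmin}_{\mathbf{C}\in\Pi(\mathcal{X}_n)} E_{f\sim P_M(\cdot\mid\mathcal{X}_n)}\big[D\{\tilde\psi(f),\mathbf{C}\}\big].$$ Assume: (A1) $D:\Pi(\mathcal{X}_n)\times\Pi(\mathcal{X}_n)\to[0,1]$ is a metric; (A2) there is a metric $\rho$ on $\mathcal{F}$ and a non-negative sequence $\epsilon_n\to 0$ such that for every non-negative sequence $K_n\to\infty$, $P_M\big(f:\rho(f,f_0)\ge \epsilon_n K_n\mid\mathcal{X}_n\big)\to 0$ in probability as $n\to\infty$; (A3) there is a non-negative sequence $K_n\to\infty$ such that $\tau_2(\mathcal{X}_n):=\sup_{f\in\mathcal{F}:\rho(f,f_0)\le K_n\epsilon_n} D\{\tilde\psi(f),\psi(f_0)\}\to 0$ in probability as $n\to\infty$, with $\rho,\epsilon_n$ as in (A2). Let $\tau_1(\mathcal{X}_n):=P_M\big(f:\rho(f,f_0)\ge \epsilon_n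 K_n\mid\mathcal{X}_n\big)$ with $K_n$ the sequence from (A3). Then $$0\le D\{\hat{\mathbf{C}},\psi(f_0)\}\le 2\tau_1(\mathcal{X}_n)+2\tau_2(\mathcal{X}_n)\to 0\quad\text{in probability as } n\to\infty.$$
   Context: A sub-partition of a finite set $\mathcal{X}_n$ is a collection $\{C_1,\dots,C_k\}$ ($k\ge 0$) of non-empty, pairwise disjoint subsets of $\mathcal{X}_n$ (their union may be a proper subset of $\mathcal{X}_n$; points not in the union are called noise/inactive points). Convergence in probability of random variables $X_n\to 0$ means $\Pr(|X_n|>\epsilon)\to 0$ for every fixed $\epsilon>0$. *)

theory Defs
  imports "HOL-Probability.Probability"
begin

definition subpartition :: "'x set \<Rightarrow> 'x set set \<Rightarrow> bool" where
  "subpartition A C \<longleftrightarrow> (\<forall>c\<in>C. c \<noteq> {} \<and> c \<subseteq> A) \<and> disjoint C"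

definition subpartitions :: "'x set \<Rightarrow> 'x set set set" where
  "subpartitions A = {C. subpartition A C}"

definition metric_on :: "'a set \<Rightarrow> ('a \<Rightarrow> 'a \<Rightarrow> real) \<Rightarrow> bool" where
  "metric_on S d \<longleftrightarrow>
     (\<forall>x\<in>S. \<forall>y\<in>S. 0 \<le> d x y \<and> (d x y = 0 \<longleftrightarrow> x = y) \<and> d x y = d y x) \<and>
     (\<forall>x\<in>S. \<forall>y\<in>S. \<forall>z\<in>S. d x z \<le> d x y + d y z)"

definition densities :: "'x measure \<Rightarrow> ('x \<Rightarrow> real) set" where
  "densities M = {f. f \<in> borel_measurable M \<and> (\<forall>x\<in>space M. 0 \<le> f x) \<and>
                      (\<integral>\<^sup>+ x. ennreal (f x) \<partial>M) = 1}"

definition conv_prob_zero :: "'o measure \<Rightarrow> (nat \<Rightarrow> 'o \<Rightarrow> real) \<Rightarrow> bool" where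
  "conv_prob_zero P Y \<longleftrightarrow> (\<forall>n. Y n \<in> borel_measurable P) \<and>
     (\<forall>e>0. (\<lambda>n. measure P {\<omega> \<in> space P. \<bar>Y n \<omega>\<bar> > e}) \<longlonglongrightarrow> 0)"

definition sample :: "(nat \<Rightarrow> 'o \<Rightarrow> 'x) \<Rightarrow> nat \<Rightarrow> 'o \<Rightarrow> 'x list" where
  "sample X n \<omega> = map (\<lambda>i. X i \<omega>) [0..<n]"

end

theory Submission
  imports Defs
begin

text \<open>Since \<hat>C minimises the posterior expected loss, comparing it with the
  competitor \<psi>(f0) and using the triangle inequality gives
  D(\<hat>C, \<psi>(f0)) \<le> 2 E[D(\<psi>t(f), \<psi>(f0))]. Splitting the posterior expectation
  into the event \<rho>(f, f0) \<ge> \<epsilon>_n K_n, where the loss is at most 1, and its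
  complement, where the loss is at most \<tau>_2, bounds it by \<tau>_1 + \<tau>_2. Both terms
  tend to 0 in probability by (A2) and (A3). The bound holds for every sample.\<close>

lemma conv_prob_zero_cmult:
  assumes "conv_prob_zero P Y"
  shows "conv_prob_zero P (\<lambda>n \<omega>. c * Y n \<omega>)"
  unfolding conv_prob_zero_def
proof (intro conjI allI impI)
  show "(\<lambda>\<omega>. c * Y n \<omega>) \<in> borel_measurable P" for n
    using assms unfolding conv_prob_zero_def by (auto intro: borel_measurable_times)
next
  fix e :: real
  assume "e > 0"
  show "(\<lambda>n. measure P {\<omega> \<in> space P. \<bar>c * Y n \<omega>\<bar> > e}) \<longlonglongrightarrow> 0"
  proof (cases "c = 0")
    case False
    have "{\<omega> \<in> space P. \<bar>c * Y n \<omega>\<bar> > e} = {\<omega> \<in> space P. \<bar>Y n \<omega>\<bar> > e / \<bar>c\<bar>}" for n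
      using False by (auto simp: abs_mult field_simps)
    then show ?thesis
      using assms \<open>e > 0\<close> False unfolding conv_prob_zero_def by simp
  qed (use \<open>e > 0\<close> in simp)
qed

lemma conv_prob_zero_add:
  assumes "finite_measure P" "conv_prob_zero P Y" "conv_prob_zero P Z"
  shows "conv_prob_zero P (\<lambda>n \<omega>. Y n \<omega> + Z n \<omega>)"
  unfolding conv_prob_zero_def
proof (intro conjI allI impI)
  show "(\<lambda>\<omega>. Y n \<omega> + Z n \<omega>) \<in> borel_measurable P" for n
    using assms unfolding conv_prob_zero_def by (auto intro: borel_measurable_add)
next
  fix e :: real
  assume "e > 0"
  define tail where "tail W n = measure P {\<omega> \<in> space P. \<bar>W n \<omega>\<bar> > e / 2}"
    for W :: "nat \<Rightarrow> 'a \<Rightarrow> real" and n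
  have "tail W \<longlonglongrightarrow> 0" if "conv_prob_zero P W" for W
  proof -
    have "\<forall>e>0. (\<lambda>n. measure P {\<omega> \<in> space P. \<bar>W n \<omega>\<bar> > e}) \<longlonglongrightarrow> 0"
      using that unfolding conv_prob_zero_def by (rule conjunct2)
    from this[rule_format, OF half_gt_zero[OF \<open>e > 0\<close>]] show ?thesis
      unfolding tail_def .
  qed
  then have tails: "tail Y \<longlonglongrightarrow> 0" "tail Z \<longlonglongrightarrow> 0"
    using assms(2,3) by blast+
  have bound: "measure P {\<omega> \<in> space P. \<bar>Y n \<omega> + Z n \<omega>\<bar> > e} \<le> tail Y n + tail Z n" for n
  proof -
    have "Y n \<in> borel_measurable P" "Z n \<in> borel_measurable P"
      using assms(2,3) unfolding conv_prob_zero_def by blast+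
    then have events: "{\<omega> \<in> space P. \<bar>Y n \<omega>\<bar> > e / 2} \<in> sets P"
        "{\<omega> \<in> space P. \<bar>Z n \<omega>\<bar> > e / 2} \<in> sets P"
      by measurable
    have "e / 2 < \<bar>Y n \<omega>\<bar> \<or> e / 2 < \<bar>Z n \<omega>\<bar>" if "e < \<bar>Y n \<omega> + Z n \<omega>\<bar>" for \<omega>
      using that abs_triangle_ineq[of "Y n \<omega>" "Z n \<omega>"] by linarith
    then have "{\<omega> \<in> space P. \<bar>Y n \<omega> + Z n \<omega>\<bar> > e}
        \<subseteq> {\<omega> \<in> space P. \<bar>Y n \<omega>\<bar> > e / 2} \<union> {\<omega> \<in> space P. \<bar>Z n \<omega>\<bar> > e / 2}"
      by blast
    then have "measure P {\<omega> \<in> space P. \<bar>Y n \<omega> + Z n \<omega>\<bar> > e}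
        \<le> measure P ({\<omega> \<in> space P. \<bar>Y n \<omega>\<bar> > e / 2} \<union> {\<omega> \<in> space P. \<bar>Z n \<omega>\<bar> > e / 2})"
      using events by (intro finite_measure.finite_measure_mono[OF assms(1)]) auto
    also have "\<dots> \<le> tail Y n + tail Z n"
      unfolding tail_def using events by (rule measure_Un_le)
    finally show ?thesis .
  qed
  show "(\<lambda>n. measure P {\<omega> \<in> space P. \<bar>Y n \<omega> + Z n \<omega>\<bar> > e}) \<longlonglongrightarrow> 0"
  proof (rule tendsto_sandwich[of "\<lambda>_. 0" _ _ "\<lambda>n. tail Y n + tail Z n"])
    show "\<forall>\<^sub>F n in sequentially. measure P {\<omega> \<in> space P. \<bar>Y n \<omega> + Z n \<omega>\<bar> > e} \<le> tail Y n + tail Z n"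
      using bound by simp
    show "(\<lambda>n. tail Y n + tail Z n) \<longlonglongrightarrow> 0"
      using tails by (rule tendsto_add_zero)
  qed simp_all
qed

lemma (in prob_space) distance_of_expected_distance_minimiser:
  assumes metric: "metric_on S d"
    and Ch: "Ch \<in> S" and C: "C \<in> S" and \<phi>: "\<And>x. x \<in> space M \<Longrightarrow> \<phi> x \<in> S"
    and integrable: "integrable M (\<lambda>x. d (\<phi> x) Ch)" "integrable M (\<lambda>x. d (\<phi> x) C)"
    and minimal: "(\<integral>x. d (\<phi> x) Ch \<partial>M) \<le> (\<integral>x. d (\<phi> x) C \<partial>M)"
  shows "d Ch C \<le> 2 * (\<integral>x. d (\<phi> x) C \<partial>M)"
proof -
  have triangle: "d Ch C \<le> d (\<phi> x) Ch + d (\<phi> x) C" if "x \<in> space M" for x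
  proof -
    have "d Ch C \<le> d Ch (\<phi> x) + d (\<phi> x) C" "d Ch (\<phi> x) = d (\<phi> x) Ch"
      using metric Ch C \<phi>[OF that] unfolding metric_on_def by blast+
    then show ?thesis by simp
  qed
  have "d Ch C = (\<integral>x. d Ch C \<partial>M)" by (simp add: prob_space)
  also have "\<dots> \<le> (\<integral>x. d (\<phi> x) Ch + d (\<phi> x) C \<partial>M)"
    by (rule integral_mono) (use triangle integrable in auto)
  also have "\<dots> = (\<integral>x. d (\<phi> x) Ch \<partial>M) + (\<integral>x. d (\<phi> x) C \<partial>M)"
    using integrable by simp
  finally show ?thesis using minimal by simp
qed

lemma (in prob_space) integral_le_prob_plus_bound_off_event:
  assumes "integrable M g" "A \<in> events" "0 \<le> t"
    and "\<And>x. x \<in> space M \<Longrightarrow> g x \<le> 1"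
    and "\<And>x. x \<in> space M - A \<Longrightarrow> g x \<le> t"
  shows "(\<integral>x. g x \<partial>M) \<le> prob A + t"
proof -
  have A_integrable: "integrable M (indicator A :: 'a \<Rightarrow> real)"
    using assms(2) by (simp add: emeasure_finite top.not_eq_extremum[symmetric])
  have "g x \<le> indicator A x + t" if "x \<in> space M" for x
    using assms(3) assms(4,5)[of x] that by (cases "x \<in> A") auto
  then have "(\<integral>x. g x \<partial>M) \<le> (\<integral>x. indicator A x + t \<partial>M)"
    using assms(1) A_integrable by (intro integral_mono) auto
  also have "\<dots> = prob A + t"
    using A_integrable assms(2) by (simp add: prob_space Int_absorb2 sets.sets_into_space)
  finally show ?thesis .
qed

lemma (in prob_space) expected_distance_minimiser_risk_bound:
  fixes d :: "'c \<Rightarrow> 'c \<Rightarrow> real" and r :: "'a \<Rightarrow> real"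
  assumes metric: "metric_on S d" and bounded: "\<And>C C'. C \<in> S \<Longrightarrow> C' \<in> S \<Longrightarrow> d C C' \<le> 1"
    and \<phi>: "\<And>x. x \<in> space M \<Longrightarrow> \<phi> x \<in> S"
    and measurable: "\<And>C. C \<in> S \<Longrightarrow> (\<lambda>x. d (\<phi> x) C) \<in> borel_measurable M"
    and r: "r \<in> borel_measurable M"
    and Ch: "Ch \<in> S" and C: "C \<in> S"
    and minimal: "(\<integral>x. d (\<phi> x) Ch \<partial>M) \<le> (\<integral>x. d (\<phi> x) C \<partial>M)"
    and z: "z \<in> space M" "r z \<le> \<delta>" \<comment> \<open>the supremum of the empty set of reals is unspecified\<close>
  shows "d Ch C \<le> 2 * prob {x \<in> space M. r x \<ge> \<delta>}
                  + 2 * (SUP x \<in> {x \<in> space M. r x \<le> \<delta>}. d (\<phi> x) C)"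
proof -
  define B where "B = {x \<in> space M. r x \<le> \<delta>}"
  have nonneg: "0 \<le> d C' C''" if "C' \<in> S" "C'' \<in> S" for C' C''
    using metric that unfolding metric_on_def by blast
  have integrable: "integrable M (\<lambda>x. d (\<phi> x) C')" if "C' \<in> S" for C'
    by (rule integrable_const_bound[where B = 1])
       (use that nonneg bounded \<phi> measurable in auto)
  have bdd: "bdd_above ((\<lambda>x. d (\<phi> x) C) ` B)"
    using bounded \<phi> C by (intro bdd_aboveI2[where M = 1]) (auto simp: B_def)
  have sup_upper: "d (\<phi> x) C \<le> (SUP x \<in> B. d (\<phi> x) C)" if "x \<in> B" for x
    by (rule cSUP_upper[OF that bdd])
  have sup_nonneg: "0 \<le> (SUP x \<in> B. d (\<phi> x) C)"
    using nonneg[OF \<phi>[OF z(1)] C] sup_upper[of z] z by (simp add: B_def)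
  have "d Ch C \<le> 2 * (\<integral>x. d (\<phi> x) C \<partial>M)"
    by (rule distance_of_expected_distance_minimiser[OF metric Ch C \<phi> integrable[OF Ch] integrable[OF C] minimal])
  also have "(\<integral>x. d (\<phi> x) C \<partial>M) \<le> prob {x \<in> space M. r x \<ge> \<delta>} + (SUP x \<in> B. d (\<phi> x) C)"
  proof (rule integral_le_prob_plus_bound_off_event[OF integrable[OF C] _ sup_nonneg])
    show "{x \<in> space M. r x \<ge> \<delta>} \<in> events"
      using r by measurable
    show "d (\<phi> x) C \<le> 1" if "x \<in> space M" for x
      by (rule bounded[OF \<phi>[OF that] C])
    show "d (\<phi> x) C \<le> (SUP x \<in> B. d (\<phi> x) C)" if "x \<in> space M - {x \<in> space M. r x \<ge> \<delta>}" for x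
      using that by (intro sup_upper) (auto simp: B_def)
  qed
  finally show ?thesis unfolding B_def by simp
qed

theorem theorem1:
  fixes P :: "'o measure" and M :: "'x measure"
    and X :: "nat \<Rightarrow> 'o \<Rightarrow> 'x"
    and f0 :: "'x \<Rightarrow> real"
    and Post :: "nat \<Rightarrow> 'x list \<Rightarrow> ('x \<Rightarrow> real) measure"
    and \<psi> \<psi>t :: "nat \<Rightarrow> 'x list \<Rightarrow> ('x \<Rightarrow> real) \<Rightarrow> 'x set set"
    and D :: "nat \<Rightarrow> 'x list \<Rightarrow> 'x set set \<Rightarrow> 'x set set \<Rightarrow> real"
    and Chat :: "nat \<Rightarrow> 'x list \<Rightarrow> 'x set set"
    and \<rho> :: "('x \<Rightarrow> real) \<Rightarrow> ('x \<Rightarrow> real) \<Rightarrow> real"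
    and \<epsilon> K :: "nat \<Rightarrow> real"
  assumes P: "prob_space P"
    and f0: "f0 \<in> densities M"
    and iid: "prob_space.indep_vars P (\<lambda>_. M) X UNIV"
    and distr: "\<And>i. distributed P M (X i) (\<lambda>x. ennreal (f0 x))"
    \<comment> \<open>posterior: a probability measure on the space of densities, for each data set\<close>
    and post_prob: "\<And>n xs. length xs = n \<Longrightarrow> prob_space (Post n xs)"
    and post_space: "\<And>n xs. length xs = n \<Longrightarrow> space (Post n xs) = densities M"
    and psi: "\<And>n xs f. length xs = n \<Longrightarrow> f \<in> densities M \<Longrightarrow> \<psi> n xs f \<in> subpartitions (set xs)"
    and psit: "\<And>n xs f. length xs = n \<Longrightarrow> f \<in> densities M \<Longrightarrow> \<psi>t n xs f \<in> subpartitions (set xs)"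
    \<comment> \<open>measurability needed for the posterior expectations / probabilities to make sense\<close>
    and meas_D: "\<And>n xs C. length xs = n \<Longrightarrow> C \<in> subpartitions (set xs) \<Longrightarrow>
                   (\<lambda>f. D n xs (\<psi>t n xs f) C) \<in> borel_measurable (Post n xs)"
    and meas_rho: "\<And>n xs. length xs = n \<Longrightarrow> (\<lambda>f. \<rho> f f0) \<in> borel_measurable (Post n xs)"
    \<comment> \<open>\<hat>C is a posterior-expected-loss minimiser\<close>
    and Chat_in: "\<And>n xs. length xs = n \<Longrightarrow> Chat n xs \<in> subpartitions (set xs)"
    and Chat_min: "\<And>n xs C. length xs = n \<Longrightarrow> C \<in> subpartitions (set xs) \<Longrightarrow>
         (\<integral>f. D n xs (\<psi>t n xs f) (Chat n xs) \<partial>Post n xs) \<le> (\<integral>f. D n xs (\<psi>t n xs f) C \<partial>Post n xs)"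
    \<comment> \<open>(A1)\<close>
    and A1_metric: "\<And>n xs. length xs = n \<Longrightarrow> metric_on (subpartitions (set xs)) (D n xs)"
    and A1_range: "\<And>n xs C C'. length xs = n \<Longrightarrow> C \<in> subpartitions (set xs) \<Longrightarrow>
                     C' \<in> subpartitions (set xs) \<Longrightarrow> D n xs C C' \<in> {0..1}"
    \<comment> \<open>(A2)\<close>
    and rho_metric: "metric_on (densities M) \<rho>"
    and eps_nonneg: "\<And>n. 0 \<le> \<epsilon> n"
    and eps_lim: "\<epsilon> \<longlonglongrightarrow> 0"
    and A2: "\<And>L. (\<forall>n. 0 \<le> L n) \<Longrightarrow> filterlim L at_top sequentially \<Longrightarrow>
         conv_prob_zero P (\<lambda>n \<omega>. measure (Post n (sample X n \<omega>))
             {f \<in> space (Post n (sample X n \<omega>)). \<rho> f f0 \<ge> \<epsilon> n * L n})"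
    \<comment> \<open>(A3)\<close>
    and K_nonneg: "\<And>n. 0 \<le> K n"
    and K_lim: "filterlim K at_top sequentially"
    and A3: "conv_prob_zero P (\<lambda>n \<omega>.
         (SUP f \<in> {f \<in> densities M. \<rho> f f0 \<le> K n * \<epsilon> n}.
             D n (sample X n \<omega>) (\<psi>t n (sample X n \<omega>) f) (\<psi> n (sample X n \<omega>) f0)))"
  shows "(\<forall>n. \<forall>\<omega>\<in>space P.
            0 \<le> D n (sample X n \<omega>) (Chat n (sample X n \<omega>)) (\<psi> n (sample X n \<omega>) f0) \<and>
            D n (sample X n \<omega>) (Chat n (sample X n \<omega>)) (\<psi> n (sample X n \<omega>) f0)
              \<le> 2 * measure (Post n (sample X n \<omega>))
                      {f \<in> space (Post n (sample X n \<omega>)). \<rho> f f0 \<ge> \<epsilon> n * K n}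
                + 2 * (SUP f \<in> {f \<in> densities M. \<rho> f f0 \<le> K n * \<epsilon> n}.
                      D n (sample X n \<omega>) (\<psi>t n (sample X n \<omega>) f) (\<psi> n (sample X n \<omega>) f0)))
         \<and> conv_prob_zero P (\<lambda>n \<omega>.
              2 * measure (Post n (sample X n \<omega>))
                      {f \<in> space (Post n (sample X n \<omega>)). \<rho> f f0 \<ge> \<epsilon> n * K n}
              + 2 * (SUP f \<in> {f \<in> densities M. \<rho> f f0 \<le> K n * \<epsilon> n}.
                      D n (sample X n \<omega>) (\<psi>t n (sample X n \<omega>) f) (\<psi> n (sample X n \<omega>) f0)))"
proof -
  define \<tau>\<^sub>1 where "\<tau>\<^sub>1 n xs = measure (Post n xs) {f \<in> space (Post n xs). \<rho> f f0 \<ge> \<epsilon> n * K n}"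
    for n xs
  define \<tau>\<^sub>2 where "\<tau>\<^sub>2 n xs = (SUP f \<in> {f \<in> densities M. \<rho> f f0 \<le> K n * \<epsilon> n}. D n xs (\<psi>t n xs f) (\<psi> n xs f0))"
    for n xs
  have "\<rho> f0 f0 = 0"
    using rho_metric f0 unfolding metric_on_def by blast
  have risk_bound: "0 \<le> D n xs (Chat n xs) (\<psi> n xs f0) \<and>
      D n xs (Chat n xs) (\<psi> n xs f0) \<le> 2 * \<tau>\<^sub>1 n xs + 2 * \<tau>\<^sub>2 n xs"
    if xs: "length xs = n" for n xs
  proof
    show "0 \<le> D n xs (Chat n xs) (\<psi> n xs f0)"
      using A1_range[OF xs Chat_in[OF xs] psi[OF xs f0]] by simp
    interpret Post: prob_space "Post n xs"
      using post_prob[OF xs] .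
    show "D n xs (Chat n xs) (\<psi> n xs f0) \<le> 2 * \<tau>\<^sub>1 n xs + 2 * \<tau>\<^sub>2 n xs"
      unfolding \<tau>\<^sub>1_def \<tau>\<^sub>2_def post_space[OF xs, symmetric] mult.commute[of "K n"]
    proof (rule Post.expected_distance_minimiser_risk_bound[where S = "subpartitions (set xs)"])
      show "\<And>C C'. C \<in> subpartitions (set xs) \<Longrightarrow> C' \<in> subpartitions (set xs) \<Longrightarrow> D n xs C C' \<le> 1"
        using A1_range[OF xs] by simp
      show "f0 \<in> space (Post n xs)" "\<rho> f0 f0 \<le> \<epsilon> n * K n"
        using f0 post_space[OF xs] \<open>\<rho> f0 f0 = 0\<close> eps_nonneg K_nonneg by simp_all
      show "\<And>f. f \<in> space (Post n xs) \<Longrightarrow> \<psi>t n xs f \<in> subpartitions (set xs)"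
        using psit[OF xs] post_space[OF xs] by simp
    qed (fact A1_metric[OF xs] meas_D[OF xs] meas_rho[OF xs] Chat_in[OF xs] psi[OF xs f0]
           Chat_min[OF xs psi[OF xs f0]])+
  qed
  have "conv_prob_zero P (\<lambda>n \<omega>. \<tau>\<^sub>1 n (sample X n \<omega>))" "conv_prob_zero P (\<lambda>n \<omega>. \<tau>\<^sub>2 n (sample X n \<omega>))"
    unfolding \<tau>\<^sub>1_def \<tau>\<^sub>2_def using A2 K_nonneg K_lim A3 by blast+
  then have "conv_prob_zero P (\<lambda>n \<omega>. 2 * \<tau>\<^sub>1 n (sample X n \<omega>) + 2 * \<tau>\<^sub>2 n (sample X n \<omega>))"
    using prob_space.finite_measure[OF P] by (intro conv_prob_zero_add conv_prob_zero_cmult)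
  moreover have sample_length: "length (sample X n \<omega>) = n" for n \<omega>
    by (simp add: sample_def)
  ultimately show ?thesis
    using risk_bound[OF sample_length] unfolding \<tau>\<^sub>1_def \<tau>\<^sub>2_def by simp
qed

end
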